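(* Let $q=2^n>2$ and let $g:\mathbb{F}_{q^2}\to\mathbb{F}_{q^2}$ be a function such that $f(x)=g(x^{q-1})$ takes values in $\mathbb{F}_2$ for all $x\in\mathbb{F}_{q^2}$. Then for $\alpha\in\mathbb{F}_{q^2}$, $$W_f(\alpha)=\begin{cases}(-1)^{g(0)}-\sum_{\lambda\in U}(-1)^{g(\lambda)}+(-1)^{g(\alpha^{1-q})}\,q, & \text{if } \alpha\neq0,\\[2pt] (-1)^{g(0)}+(q-1)\sum_{\lambda\in U}(-1)^{g(\overline{\lambda}^2)}, & \text{if } \alpha=0.\end{cases}$$
   Context: For $x\in\mathbb{F}_{q^2}$ write $\overline{x}=x^{q}$; $U=\{\eta\in\mathbb{F}_{q^2}:\eta^{q+1}=1\}$ is the unit circle. For $\alpha\ne0$, $\alpha^{1-q}$ denotes $(\alpha^{q-1})^{-1}$. The Walsh transform of a Boolean function $f:\mathbb{F}_{q^2}\to\mathbb{F}_2$ is $W_f(\alpha)=\sum_{x\in\mathbb{F}_{q^2}}(-1)^{f(x)+\mathrm{Tr}_1^{2n}(\alpha x)}$, where $\mathrm{Tr}_1^{2n}$ is the absolute trace of $\mathbb{F}_{2^{2n}}$. Values in $\mathbb{F}_2$ in exponents of $-1$ are identified with $0,1\in\mathbb{Z}$ (note $g$ takes values in $\mathbb{F}_2$ on $\{0\}\cup U$). *)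

theory Defs
  imports Main
begin

definition abs_trace :: "nat \<Rightarrow> 'a::field \<Rightarrow> 'a" where
  "abs_trace m x = (\<Sum>i<m. x ^ (2 ^ i))"

text \<open>Identify an element of F_2 = {0,1} inside the field with the integer 0 or 1.\<close>
definition b2i :: "'a::zero \<Rightarrow> nat" where
  "b2i y = (if y = 0 then 0 else 1)"

text \<open>Walsh transform of f over F_{q^2}, q = 2^n (so the absolute trace is Tr_1^{2n}).\<close>
definition walsh :: "nat \<Rightarrow> ('a::{field,finite} \<Rightarrow> 'a) \<Rightarrow> 'a \<Rightarrow> int" where
  "walsh n f \<alpha> = (\<Sum>x\<in>UNIV. (-1) ^ (b2i (f x) + b2i (abs_trace (2*n) (\<alpha> * x))))"

definition unit_circle :: "nat \<Rightarrow> 'a::field set" where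
  "unit_circle n = {\<eta>. \<eta> ^ (2 ^ n + 1) = 1}"

end

(* Write chi(z) = (-1)^Tr(z) and q = 2^n. Grouping the nonzero x by lambda = x^(q-1), which
   ranges over the unit circle U with fibres x0 * F_q^* of size q - 1, gives
     W_f(alpha) = (-1)^g(0) + sum over lambda in U of (-1)^g(lambda) * S(alpha, lambda),
   where S(alpha, lambda) is the sum of chi(alpha x) over the fibre of lambda.
   For alpha = 0 every S equals q - 1, and lambda -> conj(lambda)^2 permutes U.
   For alpha /= 0, S(alpha, lambda) = (sum of chi(alpha x0 y) over y in F_q) - 1 is q - 1 or -1
   by orthogonality of characters on the additive group F_q. It is q - 1 at
   lambda = alpha^(1-q), whose fibre contains 1/alpha, because Tr vanishes on F_q; and since
   all the S(alpha, lambda) add up to (sum of chi(alpha x) over x /= 0) = -1, it is -1 at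
   every other lambda. *)

theory Submission
  imports Defs "HOL-Computational_Algebra.Primes" "HOL-Computational_Algebra.Polynomial"
begin

lemma card_power_roots_le:
  fixes c :: "'a::idom"
  assumes "m > 0"
  shows "card {x. x ^ m = c} \<le> m"
proof -
  define p where "p = monom 1 m + [:-c:]"
  have deg: "degree p = m"
    unfolding p_def using assms by (subst degree_add_eq_left) (auto simp: degree_monom_eq)
  have "{x. x ^ m = c} = {x. poly p x = 0}"
    by (auto simp: p_def poly_monom)
  with deg assms card_poly_roots_bound[of p] show ?thesis
    by fastforce
qed

lemma of_nat_card_UNIV_eq_0: "of_nat (card (UNIV :: 'a::{ring_1,finite} set)) = (0::'a)"
proof -
  have "(\<Sum>y\<in>UNIV. 1 + y) = (\<Sum>y\<in>UNIV. y :: 'a)"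
    by (rule sum.reindex_bij_witness[of _ "\<lambda>y. y - 1" "\<lambda>y. 1 + y"]) auto
  then show ?thesis
    by (simp add: sum.distrib)
qed

lemma exponent_pos_if_card_UNIV_eq_power:
  assumes "card (UNIV :: 'a::{ring_1,finite} set) = k ^ m"
  shows "m > 0"
  using assms of_nat_card_UNIV_eq_0[where 'a='a] by (cases m) auto

lemma CHAR_eq_2:
  assumes "card (UNIV :: 'a::{field,finite} set) = 2 ^ m"
  shows "CHAR('a) = 2"
proof (rule CHAR_eq_posI)
  have "(2::'a) ^ m = 0"
    using of_nat_card_UNIV_eq_0[where 'a='a] assms by simp
  then show "of_nat 2 = (0::'a)"
    by simp
qed (auto simp: less_2_cases_iff)

lemma two_eq_0_if_CHAR_2: "CHAR('a::semiring_1) = 2 \<Longrightarrow> (2::'a) = 0"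
  using of_nat_CHAR[where 'a='a] by simp

(* The library's finite_field_power_card_eq_same needs the sort finite_field, which a type of
   sort {field, finite} does not have. *)
lemma power_card_UNIV_eq_self: "(x::'a::{field,finite}) ^ card (UNIV :: 'a set) = x"
proof (cases "x = 0")
  case False
  have "x * (\<Prod>y\<in>UNIV-{0}. x * y) = x * x ^ (card (UNIV :: 'a set) - 1) * \<Prod>(UNIV-{0})"
    by (simp add: prod.distrib mult_ac)
  also have "x * x ^ (card (UNIV :: 'a set) - 1) = x ^ card (UNIV :: 'a set)"
    using finite_UNIV_card_ge_0[where 'a='a] by (simp flip: power_Suc)
  also have "(\<Prod>y\<in>UNIV-{0}. x * y) = (\<Prod>y\<in>UNIV-{0}. y)"
    by (rule prod.reindex_bij_witness[of _ "\<lambda>y. y / x" "\<lambda>y. x * y"]) (use False in auto)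
  finally show ?thesis
    by simp
qed (use finite_UNIV_card_ge_0[where 'a='a] in auto)

lemma power_card_nonzero_eq_1:
  assumes "(x::'a::{field,finite}) \<noteq> 0"
  shows "x ^ card (UNIV - {0::'a}) = 1"
proof -
  have "x * x ^ card (UNIV - {0::'a}) = x * 1"
    using power_card_UNIV_eq_self[of x] finite_UNIV_card_ge_0[where 'a='a]
    by (simp add: card_Diff_singleton flip: power_Suc)
  with assms show ?thesis
    by simp
qed

lemma sum_character_eq_0:
  fixes \<psi> :: "'a::ab_group_add \<Rightarrow> 'b::idom"
  assumes "finite A" and add_closed: "\<And>a b. a \<in> A \<Longrightarrow> b \<in> A \<Longrightarrow> a + b \<in> A"
    and "c \<in> A" and hom: "\<And>a b. \<psi> (a + b) = \<psi> a * \<psi> b" and "\<psi> c \<noteq> 1"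
  shows "(\<Sum>y\<in>A. \<psi> y) = 0"
proof -
  have "(+) c ` A = A"
    using assms by (intro endo_inj_surj) auto
  then have "(\<Sum>y\<in>A. \<psi> y) = (\<Sum>y\<in>A. \<psi> (c + y))"
    by (metis (no_types, lifting) sum.reindex_cong add_left_imp_eq inj_onI)
  also have "\<dots> = \<psi> c * (\<Sum>y\<in>A. \<psi> y)"
    by (simp add: hom sum_distrib_left)
  finally have "(1 - \<psi> c) * (\<Sum>y\<in>A. \<psi> y) = 0"
    by (simp add: algebra_simps)
  with \<open>\<psi> c \<noteq> 1\<close> show ?thesis
    by simp
qed

lemma ex_not_poly_root:
  fixes p :: "'a::{idom,finite} poly"
  assumes "p \<noteq> 0" and "degree p < card (UNIV :: 'a set)"
  shows "\<exists>x. poly p x \<noteq> 0"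
proof (rule ccontr)
  assume "\<not> ?thesis"
  then have "{x. poly p x = 0} = UNIV"
    by auto
  with card_poly_roots_bound[OF assms(1)] assms(2) show False
    by simp
qed

lemma abs_trace_add:
  assumes "CHAR('a::field) = 2"
  shows "abs_trace m (x + y :: 'a) = abs_trace m x + abs_trace m y"
  using assms by (simp add: abs_trace_def freshmans_dream' sum.distrib)

definition add_char :: "nat \<Rightarrow> 'a::field \<Rightarrow> int" where
  "add_char m z = (-1) ^ b2i (abs_trace m z)"

lemma add_char_0 [simp]: "add_char m 0 = 1"
  by (simp add: add_char_def b2i_def abs_trace_def power_0_left)

context
  fixes m :: nat
  assumes card: "card (UNIV :: 'a::{field,finite} set) = 2 ^ m"
begin

lemma abs_trace_square: "(abs_trace m x)\<^sup>2 = abs_trace m (x::'a)"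
proof -
  let ?f = "\<lambda>i. x ^ 2 ^ i"
  have "(abs_trace m x)\<^sup>2 = (\<Sum>i<m. ?f (Suc i))"
    unfolding abs_trace_def using CHAR_eq_2[OF card]
    by (simp add: freshmans_dream_sum power_mult[symmetric] mult.commute)
  also have "\<dots> = (\<Sum>i<Suc m. ?f i) - ?f 0"
    by (simp only: sum.lessThan_Suc_shift) simp
  also have "\<dots> = abs_trace m x"
    using power_card_UNIV_eq_self[of x] by (simp add: card abs_trace_def)
  finally show ?thesis .
qed

lemma abs_trace_eq_0_or_1: "abs_trace m (x::'a) = 0 \<or> abs_trace m x = 1"
proof -
  have "abs_trace m x * (abs_trace m x - 1) = 0"
    using abs_trace_square[of x] by (simp add: power2_eq_square algebra_simps)
  then show ?thesis
    by simp
qed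

lemma ex_abs_trace_eq_1: "\<exists>z::'a. abs_trace m z = 1"
proof -
  have "m > 0"
    by (rule exponent_pos_if_card_UNIV_eq_power[OF card])
  define p :: "'a poly" where "p = (\<Sum>i<m. monom 1 (2 ^ i))"
  have "coeff p (2 ^ (m - 1)) = 1"
    using \<open>m > 0\<close> by (simp add: p_def coeff_sum coeff_monom sum.delta')
  then have "p \<noteq> 0"
    by auto
  have "degree p \<le> 2 ^ (m - 1)"
    unfolding p_def by (intro degree_sum_le) (auto simp: degree_monom_eq)
  also have "\<dots> < card (UNIV :: 'a set)"
    using \<open>m > 0\<close> by (simp add: card)
  finally obtain z where "poly p z \<noteq> 0"
    using ex_not_poly_root \<open>p \<noteq> 0\<close> by blast
  moreover have "poly p z = abs_trace m z"
    by (simp add: p_def poly_sum poly_monom abs_trace_def)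
  ultimately show ?thesis
    using abs_trace_eq_0_or_1 by metis
qed

lemma add_char_add: "add_char m (x + y :: 'a) = add_char m x * add_char m y"
  using abs_trace_eq_0_or_1[of x] abs_trace_eq_0_or_1[of y]
  using CHAR_eq_2[OF card] two_eq_0_if_CHAR_2[OF CHAR_eq_2[OF card]]
  by (auto simp: add_char_def abs_trace_add b2i_def one_add_one)

lemma sum_add_char_mult_eq_0:
  assumes "(a::'a) \<noteq> 0"
  shows "(\<Sum>x\<in>UNIV. add_char m (a * x)) = 0"
proof -
  obtain z :: 'a where "abs_trace m z = 1"
    using ex_abs_trace_eq_1 by blast
  then have "add_char m (a * (z / a)) \<noteq> 1"
    using assms by (simp add: add_char_def b2i_def)
  then show ?thesis
    by (intro sum_character_eq_0[of UNIV "z / a"]) (auto simp: distrib_left add_char_add)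
qed

end

lemma inj_power_CHAR_power:
  assumes "prime CHAR('a::idom)"
  shows "inj (\<lambda>x::'a. x ^ CHAR('a) ^ k)"
proof (rule injI)
  fix x y :: 'a
  assume eq: "x ^ CHAR('a) ^ k = y ^ CHAR('a) ^ k"
  have "x ^ CHAR('a) ^ k = (x - y) ^ CHAR('a) ^ k + y ^ CHAR('a) ^ k"
    using freshmans_dream'[OF assms refl, of "x - y" y] by simp
  with eq have "(x - y) ^ CHAR('a) ^ k = 0"
    by simp
  then show "x = y"
    by simp
qed

lemma power_in_unit_circle:
  assumes "l \<in> unit_circle n"
  shows "l ^ k \<in> unit_circle n"
proof -
  have "(l ^ k) ^ (2 ^ n + 1) = (l ^ (2 ^ n + 1)) ^ k"
    by (simp only: power_mult[symmetric] mult.commute)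
  with assms show ?thesis
    by (simp add: unit_circle_def)
qed

definition fibre :: "nat \<Rightarrow> 'a::field \<Rightarrow> 'a set" where
  "fibre n l = {x. x \<noteq> 0 \<and> x ^ (2 ^ n - 1) = l}"

definition fixed_field :: "nat \<Rightarrow> 'a::field set" where
  "fixed_field n = {y. y ^ 2 ^ n = y}"

definition fibre_char_sum :: "nat \<Rightarrow> 'a::field \<Rightarrow> 'a \<Rightarrow> int" where
  "fibre_char_sum n a l = (\<Sum>x\<in>fibre n l. add_char (2 * n) (a * x))"

lemma fixed_field_add:
  fixes a b :: "'a::field"
  assumes "CHAR('a) = 2" and "a \<in> fixed_field n" and "b \<in> fixed_field n"
  shows "a + b \<in> fixed_field n"
proof -
  have "(a + b) ^ 2 ^ n = a ^ 2 ^ n + b ^ 2 ^ n"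
    using assms(1) by (simp add: freshmans_dream')
  with assms(2,3) show ?thesis
    by (simp add: fixed_field_def)
qed

lemma abs_trace_fixed_field:
  assumes "CHAR('a::field) = 2" and "z \<in> fixed_field n"
  shows "abs_trace (2 * n) (z::'a) = 0"
proof -
  let ?f = "\<lambda>i. z ^ 2 ^ i"
  have periodic: "?f (i + n) = ?f i" for i
  proof -
    have "?f (i + n) = (z ^ 2 ^ n) ^ 2 ^ i"
      by (simp add: power_add power_mult[symmetric] mult.commute)
    with assms(2) show ?thesis
      by (simp add: fixed_field_def)
  qed
  have "abs_trace (2 * n) z = (\<Sum>i<n. ?f i) + (\<Sum>i<n. ?f (i + n))"
    using sum.atLeastLessThan_concat[of 0 n "2 * n" ?f] sum.shift_bounds_nat_ivl[of ?f 0 n n]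
    by (simp add: abs_trace_def lessThan_atLeast0 mult_2)
  also have "\<dots> = 2 * abs_trace n z"
    by (simp only: periodic abs_trace_def mult_2)
  finally have "abs_trace (2 * n) z = 2 * abs_trace n z" .
  with two_eq_0_if_CHAR_2[OF assms(1)] show ?thesis
    by simp
qed

lemma fibre_1:
  assumes "n > 0"
  shows "fibre n 1 = fixed_field n - {0::'a::field}"
proof -
  have "y ^ 2 ^ n = y * y ^ (2 ^ n - 1)" for y :: 'a
    using assms by (simp flip: power_Suc)
  then have "y \<in> fixed_field n \<longleftrightarrow> y = 0 \<or> y ^ (2 ^ n - 1) = 1" for y :: 'a
    by (auto simp: fixed_field_def)
  then show ?thesis
    by (auto simp: fibre_def)
qed

lemma fibre_eq_image:
  assumes "n > 0" and "x0 \<in> fibre n l"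
  shows "fibre n l = (*) x0 ` (fixed_field n - {0::'a::field})"
proof -
  have "x0 \<noteq> 0" and x0: "x0 ^ (2 ^ n - 1) = l"
    using assms(2) by (auto simp: fibre_def)
  then have "l \<noteq> 0"
    by auto
  have quotient: "x \<in> fibre n l \<longleftrightarrow> x / x0 \<in> fibre n 1" for x
    using \<open>x0 \<noteq> 0\<close> \<open>l \<noteq> 0\<close> x0 by (simp add: fibre_def power_divide)
  have "fibre n l = (*) x0 ` fibre n 1"
  proof (intro set_eqI iffI)
    fix x
    assume "x \<in> fibre n l"
    then have "x / x0 \<in> fibre n 1"
      using quotient by blast
    moreover have "x = x0 * (x / x0)"
      using \<open>x0 \<noteq> 0\<close> by simp
    ultimately show "x \<in> (*) x0 ` fibre n 1"
      by blast
  next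
    fix x
    assume "x \<in> (*) x0 ` fibre n 1"
    then obtain y where "y \<in> fibre n 1" and "x = x0 * y"
      by blast
    with \<open>x0 \<noteq> 0\<close> quotient show "x \<in> fibre n l"
      by simp
  qed
  then show ?thesis
    by (simp add: fibre_1[OF assms(1)])
qed

context
  fixes n :: nat
  assumes card: "card (UNIV :: 'a::{field,finite} set) = 2 ^ (2 * n)"
begin

lemma n_pos: "n > 0"
  using exponent_pos_if_card_UNIV_eq_power[OF card] by simp

lemma one_less_power_2: "1 < (2::nat) ^ n"
  using n_pos less_exp[of n] by linarith

lemma card_nonzero: "card (UNIV - {0::'a}) = (2 ^ n - 1) * (2 ^ n + 1)"
proof -
  have "card (UNIV :: 'a set) = 2 ^ n * 2 ^ n"
    by (simp add: card mult_2 power_add)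
  moreover have "(1::nat) \<le> 2 ^ n"
    by simp
  ultimately show ?thesis
    by (simp add: card_Diff_singleton algebra_simps diff_mult_distrib)
qed

lemma power_minus_1_in_unit_circle:
  assumes "(x::'a) \<noteq> 0"
  shows "x ^ (2 ^ n - 1) \<in> unit_circle n"
proof -
  have "(x ^ (2 ^ n - 1)) ^ (2 ^ n + 1) = x ^ card (UNIV - {0::'a})"
    by (simp only: card_nonzero power_mult)
  also have "\<dots> = 1"
    by (rule power_card_nonzero_eq_1[OF assms])
  finally show ?thesis
    by (simp add: unit_circle_def)
qed

lemma inverse_power_minus_1_in_unit_circle:
  "(a::'a) \<noteq> 0 \<Longrightarrow> inverse (a ^ (2 ^ n - 1)) \<in> unit_circle n"
  using power_minus_1_in_unit_circle[of "inverse a"] by (simp add: power_inverse)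

lemma sum_fibres:
  "(\<Sum>l\<in>unit_circle n. \<Sum>x\<in>fibre n l. G x) = (\<Sum>x\<in>UNIV - {0::'a}. G x)"
proof -
  have "(\<Sum>l\<in>unit_circle n. \<Sum>x\<in>{x. x \<in> UNIV - {0} \<and> x ^ (2 ^ n - 1) = l}. G x)
      = (\<Sum>x\<in>UNIV - {0::'a}. G x)"
    by (rule sum.group) (simp, simp, blast intro: power_minus_1_in_unit_circle)
  moreover have "fibre n l = {x. x \<in> UNIV - {0} \<and> x ^ (2 ^ n - 1) = l}" for l :: 'a
    by (auto simp: fibre_def)
  ultimately show ?thesis
    by simp
qed

lemma card_fibre_and_unit_circle:
  "card (unit_circle n :: 'a set) = 2 ^ n + 1 \<and>
   (\<forall>l\<in>unit_circle n. card (fibre n l :: 'a set) = 2 ^ n - 1)"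
proof -
  let ?U = "unit_circle n :: 'a set"
  have fibre_le: "card (fibre n l :: 'a set) \<le> 2 ^ n - 1" for l :: 'a
  proof -
    have "card (fibre n l) \<le> card {x. x ^ (2 ^ n - 1) = l}"
      by (intro card_mono) (auto simp: fibre_def)
    also have "\<dots> \<le> 2 ^ n - 1"
      using one_less_power_2 by (intro card_power_roots_le) simp
    finally show ?thesis .
  qed
  have "(\<Sum>l\<in>?U. card (fibre n l)) = (2 ^ n + 1) * (2 ^ n - 1)"
    using sum_fibres[of "\<lambda>_. 1::nat"]
    by (simp only: mult.commute card_nonzero[symmetric] card_eq_sum)
  moreover have "(\<Sum>l\<in>?U. card (fibre n l)) \<le> (\<Sum>l\<in>?U. 2 ^ n - 1 :: nat)"
    by (intro sum_mono fibre_le)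
  moreover have "(\<Sum>l\<in>?U. 2 ^ n - 1 :: nat) \<le> (2 ^ n + 1) * (2 ^ n - 1)"
  proof -
    have "card ?U \<le> 2 ^ n + 1"
      unfolding unit_circle_def by (rule card_power_roots_le) simp
    then show ?thesis
      unfolding sum_constant of_nat_id by (rule mult_right_mono) simp
  qed
  ultimately have tight: "card ?U * (2 ^ n - 1) = (2 ^ n + 1) * (2 ^ n - 1)"
    and "(\<Sum>l\<in>?U. card (fibre n l)) = (\<Sum>l\<in>?U. 2 ^ n - 1 :: nat)"
    by simp_all
  then have "\<forall>l\<in>?U. card (fibre n l) = 2 ^ n - 1"
    using sum_mono_inv[of "\<lambda>l. card (fibre n l)" ?U, OF _ fibre_le] by simp
  moreover have "card ?U = 2 ^ n + 1"
    using tight one_less_power_2 by (simp only: mult_cancel2) arith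
  ultimately show ?thesis
    by blast
qed

lemma card_unit_circle: "card (unit_circle n :: 'a set) = 2 ^ n + 1"
  using card_fibre_and_unit_circle by blast

lemma card_fibre: "l \<in> unit_circle n \<Longrightarrow> card (fibre n (l::'a)) = 2 ^ n - 1"
  using card_fibre_and_unit_circle by blast

lemma fibre_nonempty: "l \<in> unit_circle n \<Longrightarrow> fibre n (l::'a) \<noteq> {}"
  using card_fibre one_less_power_2 by fastforce

lemma card_fixed_field: "card (fixed_field n :: 'a set) = 2 ^ n"
proof -
  have "0 \<in> fixed_field n"
    using n_pos by (simp add: fixed_field_def)
  moreover have "card (fixed_field n - {0::'a}) = 2 ^ n - 1"
    using card_fibre[of 1] fibre_1[OF n_pos, where 'a='a] by (simp add: unit_circle_def)
  ultimately show ?thesis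
    using card.remove[of "fixed_field n :: 'a set" 0] one_less_power_2 by simp
qed

lemma sum_add_char_fixed_field:
  fixes c :: 'a
  shows "(\<Sum>y\<in>fixed_field n. add_char (2 * n) (c * y)) \<in> {2 ^ n, 0::int}"
proof (cases "\<forall>y\<in>fixed_field n. add_char (2 * n) (c * y) = 1")
  case True
  then show ?thesis
    by (simp add: card_fixed_field)
next
  case False
  then obtain y0 :: 'a where "y0 \<in> fixed_field n" and "add_char (2 * n) (c * y0) \<noteq> 1"
    by blast
  then have "(\<Sum>y\<in>fixed_field n. add_char (2 * n) (c * y)) = 0"
    using fixed_field_add[OF CHAR_eq_2[OF card]]
    by (intro sum_character_eq_0[of _ y0]) (auto simp: distrib_left add_char_add[OF card])
  then show ?thesis
    by simp
qed

lemma fibre_char_sum_via_fixed_field: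
  fixes a l x0 :: 'a
  assumes "x0 \<in> fibre n l"
  shows "fibre_char_sum n a l = (\<Sum>y\<in>fixed_field n. add_char (2 * n) (a * x0 * y)) - 1"
proof -
  have "x0 \<noteq> 0"
    using assms by (simp add: fibre_def)
  then have "inj_on ((*) x0) (fixed_field n - {0})"
    by (auto simp: inj_on_def)
  then have "fibre_char_sum n a l = (\<Sum>y\<in>fixed_field n - {0}. add_char (2 * n) (a * x0 * y))"
    by (simp add: fibre_char_sum_def fibre_eq_image[OF n_pos assms] sum.reindex mult.assoc)
  also have "\<dots> = (\<Sum>y\<in>fixed_field n. add_char (2 * n) (a * x0 * y)) - 1"
    using n_pos by (subst sum_diff1) (auto simp: fixed_field_def)
  finally show ?thesis .
qed

lemma fibre_char_sum_cases:
  fixes a l :: 'a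
  assumes "l \<in> unit_circle n"
  shows "fibre_char_sum n a l \<in> {2 ^ n - 1, -1}"
proof -
  obtain x0 :: 'a where "x0 \<in> fibre n l"
    using fibre_nonempty[OF assms] by blast
  then show ?thesis
    using sum_add_char_fixed_field[of "a * x0"] by (auto simp: fibre_char_sum_via_fixed_field)
qed

lemma fibre_char_sum_0: "(l::'a) \<in> unit_circle n \<Longrightarrow> fibre_char_sum n 0 l = 2 ^ n - 1"
  by (simp add: fibre_char_sum_def card_fibre one_le_power of_nat_diff)

lemma fibre_char_sum_at_inverse:
  assumes "(a::'a) \<noteq> 0"
  shows "fibre_char_sum n a (inverse (a ^ (2 ^ n - 1))) = 2 ^ n - 1"
proof -
  have "inverse a \<in> fibre n (inverse (a ^ (2 ^ n - 1)))"
    using assms by (simp add: fibre_def power_inverse)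
  moreover have "add_char (2 * n) y = 1" if "y \<in> fixed_field n" for y :: 'a
    using abs_trace_fixed_field[OF CHAR_eq_2[OF card] that] by (simp add: add_char_def b2i_def)
  ultimately show ?thesis
    using assms by (simp add: fibre_char_sum_via_fixed_field card_fixed_field)
qed

lemma sum_fibre_char_sum:
  assumes "(a::'a) \<noteq> 0"
  shows "(\<Sum>l\<in>unit_circle n. fibre_char_sum n a l) = -1"
proof -
  have "(\<Sum>l\<in>unit_circle n. fibre_char_sum n a l) = (\<Sum>x\<in>UNIV - {0}. add_char (2 * n) (a * x))"
    unfolding fibre_char_sum_def by (rule sum_fibres)
  also have "\<dots> = (\<Sum>x\<in>UNIV. add_char (2 * n) (a * x)) - 1"
    by (subst sum_diff1) auto
  finally show ?thesis
    using sum_add_char_mult_eq_0[OF card assms] by simp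
qed

lemma fibre_char_sum_eq_if:
  assumes "(a::'a) \<noteq> 0" and "l \<in> unit_circle n"
  shows "fibre_char_sum n a l = (if l = inverse (a ^ (2 ^ n - 1)) then 2 ^ n else 0) - 1"
proof -
  let ?U = "unit_circle n :: 'a set" and ?la = "inverse (a ^ (2 ^ n - 1))"
  have "?la \<in> ?U"
    by (rule inverse_power_minus_1_in_unit_circle[OF assms(1)])
  have "(\<Sum>l\<in>?U. fibre_char_sum n a l + 1) = 2 ^ n"
    using sum_fibre_char_sum[OF assms(1)] by (simp add: sum.distrib card_unit_circle)
  also have "(\<Sum>l\<in>?U. fibre_char_sum n a l + 1)
      = 2 ^ n + (\<Sum>l\<in>?U - {?la}. fibre_char_sum n a l + 1)"
    using \<open>?la \<in> ?U\<close> fibre_char_sum_at_inverse[OF assms(1)] by (simp add: sum.remove)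
  finally have "(\<Sum>l\<in>?U - {?la}. fibre_char_sum n a l + 1) = 0"
    by simp
  moreover have "fibre_char_sum n a l + 1 \<ge> 0" if "l \<in> ?U" for l
    using fibre_char_sum_cases[OF that, of a] by auto
  ultimately have others: "\<forall>l\<in>?U - {?la}. fibre_char_sum n a l + 1 = 0"
    by (subst (asm) sum_nonneg_eq_0_iff) auto
  show ?thesis
  proof (cases "l = ?la")
    case True
    then show ?thesis
      using fibre_char_sum_at_inverse[OF assms(1)] by simp
  next
    case False
    then have "fibre_char_sum n a l + 1 = 0"
      using others assms(2) by blast
    with False show ?thesis
      by simp
  qed
qed

lemma sum_unit_circle_reindex:
  "(\<Sum>l\<in>unit_circle n. H l) = (\<Sum>l\<in>unit_circle n. H ((l ^ 2 ^ n) ^ 2 :: 'a))"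
proof -
  let ?U = "unit_circle n :: 'a set" and ?m = "\<lambda>l::'a. (l ^ 2 ^ n) ^ 2"
  have "?m = (\<lambda>l. l ^ CHAR('a) ^ Suc n)"
    using CHAR_eq_2[OF card] by (simp add: mult.commute flip: power_mult)
  then have "inj ?m"
    using inj_power_CHAR_power[where 'a='a, of "Suc n"] CHAR_eq_2[OF card] by simp
  then have "inj_on ?m ?U"
    by (rule inj_on_subset) simp
  moreover have "?m ` ?U = ?U"
    using \<open>inj_on ?m ?U\<close> by (intro endo_inj_surj) (auto intro: power_in_unit_circle)
  ultimately show ?thesis
    using sum.reindex[of ?m ?U H] by simp
qed

lemma walsh_eq_sum_fibre_char_sums:
  "walsh n (\<lambda>x. g (x ^ (2 ^ n - 1))) \<alpha>
     = (-1) ^ b2i (g 0) + (\<Sum>l\<in>unit_circle n. (-1) ^ b2i (g l) * fibre_char_sum n \<alpha> (l::'a))"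
proof -
  let ?h = "\<lambda>l. (-1::int) ^ b2i (g l)"
  let ?F = "\<lambda>x. ?h (x ^ (2 ^ n - 1)) * add_char (2 * n) (\<alpha> * x)"
  have "walsh n (\<lambda>x. g (x ^ (2 ^ n - 1))) \<alpha> = (\<Sum>x\<in>UNIV. ?F x)"
    by (simp add: walsh_def add_char_def power_add)
  also have "\<dots> = ?F 0 + (\<Sum>x\<in>UNIV - {0}. ?F x)"
    by (simp add: sum.remove[of UNIV 0])
  also have "?F 0 = ?h 0"
    using one_less_power_2 by (simp add: power_0_left)
  also have "(\<Sum>x\<in>UNIV - {0}. ?F x) = (\<Sum>l\<in>unit_circle n. \<Sum>x\<in>fibre n l. ?F x)"
    by (rule sum_fibres[symmetric])
  also have "\<dots> = (\<Sum>l\<in>unit_circle n. ?h l * fibre_char_sum n \<alpha> l)"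
    unfolding fibre_char_sum_def sum_distrib_left by (intro sum.cong) (auto simp: fibre_def)
  finally show ?thesis .
qed

end

theorem proposition3:
  fixes n :: nat and g :: "'a::{field,finite} \<Rightarrow> 'a" and \<alpha> :: 'a
  assumes card: "card (UNIV :: 'a set) = 2 ^ (2 * n)"
    and q_gt_2: "(2::nat) ^ n > 2"
    and bool_valued: "\<forall>x::'a. g (x ^ (2 ^ n - 1)) \<in> {0, 1}"
  shows "walsh n (\<lambda>x. g (x ^ (2 ^ n - 1))) \<alpha> =
    (if \<alpha> \<noteq> 0 then
       (-1) ^ b2i (g 0) - (\<Sum>l\<in>unit_circle n. (-1) ^ b2i (g l))
         + (-1) ^ b2i (g (inverse (\<alpha> ^ (2 ^ n - 1)))) * 2 ^ n
     else
       (-1) ^ b2i (g 0) + (2 ^ n - 1) * (\<Sum>l\<in>unit_circle n. (-1) ^ b2i (g ((l ^ (2 ^ n)) ^ 2))))"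
proof -
  let ?h = "\<lambda>l. (-1::int) ^ b2i (g l)" and ?U = "unit_circle n :: 'a set"
  note walsh = walsh_eq_sum_fibre_char_sums[OF card, of g \<alpha>]
  show ?thesis
  proof (cases "\<alpha> = 0")
    case True
    then have "(\<Sum>l\<in>?U. ?h l * fibre_char_sum n \<alpha> l) = (2 ^ n - 1) * (\<Sum>l\<in>?U. ?h l)"
      by (simp add: fibre_char_sum_0[OF card] sum_distrib_left mult.commute)
    with walsh True show ?thesis
      by (simp add: sum_unit_circle_reindex[OF card, of ?h])
  next
    case False
    let ?la = "inverse (\<alpha> ^ (2 ^ n - 1))"
    have "(\<Sum>l\<in>?U. ?h l * fibre_char_sum n \<alpha> l) = (\<Sum>l\<in>?U. (if l = ?la then ?h l * 2 ^ n else 0) - ?h l)"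
      by (intro sum.cong) (simp_all add: fibre_char_sum_eq_if[OF card False] algebra_simps)
    also have "\<dots> = ?h ?la * 2 ^ n - (\<Sum>l\<in>?U. ?h l)"
      using inverse_power_minus_1_in_unit_circle[OF card False] by (simp add: sum_subtractf)
    finally show ?thesis
      using walsh False by simp
  qed
qed

end
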